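(* There exist constants $\mu_0\in(0,1/10)$ and $c>0$, independent of $\mu$, $\varepsilon$ and $\Gamma_0$, with the following property. Let $0<\mu\le\mu_0$ and $\varepsilon\in(0,1)$. Let $q(f)$ be a solution of the ER3BP (with $q=(x-1+\mu,y,z)$) transiting through the Hill's sphere of $P_2$ in the interval $[f_1,f_2]$, i.e. $\|q(f_1)\|=\|q(f_2)\|=\mu^{1/3}$ and $0<\|q(f)\|<\mu^{1/3}$ for all $f\in(f_1,f_2)$, and let $(u(s),\phi(s),U(s),\Phi(s))$ be a solution of the Hamilton equations of the regularized Hamiltonian $\mathcal{K}$ satisfying $l(u,U)=0$ and $\mathcal{K}=0$, related to $q$ by $\phi(s)=f(s)$, $\mathrm{d}f/\mathrm{d}s=\|u(s)\|^2$ and $\pi(u(s))=q(f(s))$ for $s\in[s_1,s_2]$, where $f(s_1)=f_1$, $f(s_2)=f_2$. Set $\Gamma_s=\Gamma(\phi(s),\Phi(s))$ and $\Gamma_0=\Gamma_{s_1}$. If $\Gamma_0>0$ and $\mu<c(1-\varepsilon)^6\Gamma_0^{3/2}$, then $\Gamma_s\in[\Gamma_0/2,\,3\Gamma_0/2]$ for all $s\in[s_1,s_2]$.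
   Context: The ER3BP with mass parameter $\mu$ and eccentricity $\varepsilon$ is given by the Hamiltonian (independent variable the true anomaly $f$ of $P_2$, rotating-pulsating frame with $P_1=(-\mu,0,0)$, $P_2=(1-\mu,0,0)$) $$\mathcal{H}=\tfrac12(p_1^2+p_2^2+p_3^2)+p_1y-xp_2-\frac{1}{1+\varepsilon\cos f}\Big(\frac{1-\mu}{d_1}+\frac{\mu}{d_2}-\tfrac12(x^2+y^2+z^2)\varepsilon\cos f\Big),$$ $d_1=\sqrt{(x+\mu)^2+y^2+z^2}$, $d_2=\sqrt{(x-1+\mu)^2+y^2+z^2}$. Kustaanheimo–Stiefel map: $\pi(u)=(\pi_1,\pi_2,\pi_3)(u)=(u_1^2-u_2^2-u_3^2+u_4^2,\;2u_1u_2-2u_3u_4,\;2u_1u_3+2u_2u_4)$, $u\in\mathbb{R}^4$; $A(u)$ is the $4\times4$ matrix with rows $(u_1,-u_2,-u_3,u_4)$, $(u_2,u_1,-u_4,-u_3)$, $(u_3,u_4,u_1,u_2)$, $(u_4,-u_3,u_2,-u_1)$; $\Lambda$ is the $4\times4$ matrix with only nonzero entries $\Lambda_{12}=-1$, $\Lambda_{21}=1$; $b(u)=2A(u)^T\Lambda A(u)u$; $l(u,U)=u_4U_1-u_3U_2+u_2U_3-u_1U_4$. The regularized Hamiltonian is $$\mathcal{K}(u,\phi,U,\Phi)=\tfrac18\|U-b(u)\|^2-\frac{1}{1+\varepsilon\cos\phi}\Big[(1-\mu)\|u\|^2\Big(\frac{1}{\|\pi(u)+(1,0,0)\|}+\pi_1(u)\Big)+\mu+\tfrac12\|u\|^2\big(\pi_1^2+\pi_2^2-\pi_3^2\varepsilon\cos\phi\big)+\frac{(1-\mu)^2}{2}\|u\|^2\Big]+\Phi\|u\|^2,$$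 with Hamilton equations in the independent variable $s$. Define $\Gamma(\phi,\Phi)=-\Phi+\dfrac{3-4\mu+\mu^2}{2(1+\varepsilon\cos\phi)}$. *)

theory Defs
  imports "HOL-Analysis.Analysis"
begin

text \<open>H t x p : independent variable t, positions x, momenta p.
  x' = dH/dp, p' = - dH/dx (gradients via Frechet derivatives), one-sided at the ends of S.\<close>
definition hamiltonian_solution ::
  "(real \<Rightarrow> 'a::real_inner \<Rightarrow> 'a \<Rightarrow> real) \<Rightarrow> (real \<Rightarrow> 'a) \<Rightarrow> (real \<Rightarrow> 'a) \<Rightarrow> real set \<Rightarrow> bool" where
  "hamiltonian_solution H x p S \<longleftrightarrow>
     (\<forall>t\<in>S. \<exists>dx dp.
        (x has_vector_derivative dx) (at t within S) \<and>
        (p has_vector_derivative dp) (at t within S) \<and>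
        ((\<lambda>y. H t (x t) y) has_derivative (\<lambda>h. dx \<bullet> h)) (at (p t)) \<and>
        ((\<lambda>y. H t y (p t)) has_derivative (\<lambda>h. - (dp \<bullet> h))) (at (x t)))"

definition H_ER3BP :: "real \<Rightarrow> real \<Rightarrow> real \<Rightarrow> real^3 \<Rightarrow> real^3 \<Rightarrow> real" where
  "H_ER3BP \<mu> \<epsilon> f X p =
     (let x = X$1; y = X$2; z = X$3;
          d1 = sqrt ((x + \<mu>)^2 + y^2 + z^2);
          d2 = sqrt ((x - 1 + \<mu>)^2 + y^2 + z^2)
      in (1/2) * ((p$1)^2 + (p$2)^2 + (p$3)^2) + p$1 * y - x * p$2
         - 1 / (1 + \<epsilon> * cos f) *
           ((1 - \<mu>) / d1 + \<mu> / d2 - (1/2) * (x^2 + y^2 + z^2) * \<epsilon> * cos f))"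

definition pi_KS :: "real^4 \<Rightarrow> real^3" where
  "pi_KS u = vector [ (u$1)^2 - (u$2)^2 - (u$3)^2 + (u$4)^2,
                      2 * u$1 * u$2 - 2 * u$3 * u$4,
                      2 * u$1 * u$3 + 2 * u$2 * u$4 ]"

definition A_KS :: "real^4 \<Rightarrow> real^4^4" where
  "A_KS u = vector [ vector [u$1, - u$2, - u$3, u$4],
                     vector [u$2, u$1, - u$4, - u$3],
                     vector [u$3, u$4, u$1, u$2],
                     vector [u$4, - u$3, u$2, - u$1] ]"

definition Lambda_KS :: "real^4^4" where
  "Lambda_KS = (\<chi> i j. if i = 1 \<and> j = 2 then -1 else if i = 2 \<and> j = 1 then 1 else 0)"

definition b_KS :: "real^4 \<Rightarrow> real^4" where
  "b_KS u = 2 *\<^sub>R ((transpose (A_KS u) ** Lambda_KS ** A_KS u) *v u)"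

definition l_KS :: "real^4 \<Rightarrow> real^4 \<Rightarrow> real" where
  "l_KS u U = u$4 * U$1 - u$3 * U$2 + u$2 * U$3 - u$1 * U$4"

definition K_reg :: "real \<Rightarrow> real \<Rightarrow> real^4 \<Rightarrow> real \<Rightarrow> real^4 \<Rightarrow> real \<Rightarrow> real" where
  "K_reg \<mu> \<epsilon> u \<phi> U \<Phi> =
     (let P = pi_KS u; r2 = (norm u)^2 in
       (1/8) * (norm (U - b_KS u))^2
       - 1 / (1 + \<epsilon> * cos \<phi>) *
         ((1 - \<mu>) * r2 * (1 / norm (P + vector [1, 0, 0]) + P$1)
          + \<mu>
          + (1/2) * r2 * ((P$1)^2 + (P$2)^2 - (P$3)^2 * \<epsilon> * cos \<phi>)
          + ((1 - \<mu>)^2 / 2) * r2)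
       + \<Phi> * r2)"

definition K_ham :: "real \<Rightarrow> real \<Rightarrow> real \<Rightarrow> (real^4) \<times> real \<Rightarrow> (real^4) \<times> real \<Rightarrow> real" where
  "K_ham \<mu> \<epsilon> s w W = K_reg \<mu> \<epsilon> (fst w) (snd w) (fst W) (snd W)"

definition Gamma_fn :: "real \<Rightarrow> real \<Rightarrow> real \<Rightarrow> real \<Rightarrow> real" where
  "Gamma_fn \<mu> \<epsilon> \<phi> \<Phi> = - \<Phi> + (3 - 4 * \<mu> + \<mu>^2) / (2 * (1 + \<epsilon> * cos \<phi>))"

end

theory Submission
  imports Defs
begin

(*
  Write r = |u|^2, rho = 1 + eps cos phi, b = b(u), and let E be the bracket in K, so that
  K = |U - b|^2/8 - E/rho + Phi r.  Near P2, E = mu + C r + O(r^3) with C = (3 - 4 mu + mu^2)/2,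
  the constant appearing in Gamma; hence on K = 0 we have |U - b|^2 = 8 ((E - C r)/rho + Gamma r).
  While Gamma stays in [Gamma0/2, 3 Gamma0/2], the smallness of mu makes r^2 tiny compared with
  Gamma, and then
  (1) the virial w = <u, U> satisfies w' >= 7/4 (mu/rho + Gamma r) >= (1 - eps) |Gamma'|;
  (2) |w| <= (1 - eps) Gamma0/8, by Cauchy-Schwarz, since <u, b> = 0.
  So Gamma + w/(1 - eps) and w/(1 - eps) - Gamma are nondecreasing while Gamma is in the band,
  which keeps Gamma within Gamma0/4 of Gamma0: it never reaches the ends of the band.
  Only the regularized flow enters.
*)

section \<open>The Kustaanheimo--Stiefel map\<close>

lemma vector_4 [simp]:
  "(vector [x, y, z, w] :: 'a::zero^4) $ 1 = x"
  "(vector [x, y, z, w] :: 'a::zero^4) $ 2 = y"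
  "(vector [x, y, z, w] :: 'a::zero^4) $ 3 = z"
  "(vector [x, y, z, w] :: 'a::zero^4) $ 4 = w"
  unfolding vector_def by simp_all

lemma norm_vec3_sq: "(norm (v :: real^3))^2 = (v$1)^2 + (v$2)^2 + (v$3)^2"
  by (simp only: power2_norm_eq_inner) (simp add: inner_vec_def sum_3 power2_eq_square)

lemma norm_vec4_sq: "(norm (v :: real^4))^2 = (v$1)^2 + (v$2)^2 + (v$3)^2 + (v$4)^2"
  by (simp only: power2_norm_eq_inner) (simp add: inner_vec_def sum_4 power2_eq_square)

lemma pi_KS_nth [simp]:
  "pi_KS u $ 1 = (u$1)^2 - (u$2)^2 - (u$3)^2 + (u$4)^2"
  "pi_KS u $ 2 = 2 * u$1 * u$2 - 2 * u$3 * u$4"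
  "pi_KS u $ 3 = 2 * u$1 * u$3 + 2 * u$2 * u$4"
  by (simp_all add: pi_KS_def)

lemma b_KS_nth:
  fixes u :: "real^4"
  defines "P \<equiv> pi_KS u"
  shows "b_KS u $ 1 = 2 * (P$1 * u$2 - P$2 * u$1)"
    and "b_KS u $ 2 = 2 * (P$1 * u$1 + P$2 * u$2)"
    and "b_KS u $ 3 = 2 * (P$2 * u$3 - P$1 * u$4)"
    and "b_KS u $ 4 = - 2 * (P$1 * u$3 + P$2 * u$4)"
  unfolding P_def b_KS_def A_KS_def Lambda_KS_def
  by (simp_all add: matrix_vector_mult_def matrix_matrix_mult_def transpose_def sum_4
      algebra_simps power2_eq_square)

lemma pi_KS_scaleR: "pi_KS (c *\<^sub>R u) = c^2 *\<^sub>R pi_KS u"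
  by (simp add: vec_eq_iff forall_3 algebra_simps power2_eq_square)

lemma b_KS_scaleR: "b_KS (c *\<^sub>R u) = c^3 *\<^sub>R b_KS u"
  by (simp add: vec_eq_iff forall_4 b_KS_nth algebra_simps power2_eq_square power3_eq_cube)

lemma norm_pi_KS: "norm (pi_KS u) = (norm u)^2"
proof -
  have "(norm (pi_KS u))^2 = ((norm u)^2)^2"
    unfolding norm_vec3_sq norm_vec4_sq pi_KS_nth by algebra
  then show ?thesis
    by (metis norm_ge_zero power2_eq_iff_nonneg zero_le_power2)
qed

lemma inner_b_KS_self: "inner u (b_KS u) = 0"
  by (simp add: inner_vec_def sum_4 b_KS_nth algebra_simps power2_eq_square)

lemma norm_b_KS_sq_le: "(norm (b_KS u))^2 \<le> 4 * ((norm u)^2)^3"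
proof -
  have "(norm (b_KS u))^2 = 4 * ((pi_KS u $ 1)^2 + (pi_KS u $ 2)^2) * (norm u)^2"
    unfolding norm_vec4_sq b_KS_nth by (simp only: pi_KS_nth) (simp add: power2_eq_square algebra_simps)
  also have "\<dots> \<le> 4 * (norm (pi_KS u))^2 * (norm u)^2"
    by (intro mult_right_mono) (auto simp: norm_vec3_sq simp del: pi_KS_nth)
  finally show ?thesis
    by (simp add: norm_pi_KS power2_eq_square power3_eq_cube)
qed

lemma norm_add_e1_sq: "(norm (x + vector [1, 0, 0] :: real^3))^2 = (norm x)^2 + 2 * x$1 + 1"
  unfolding norm_vec3_sq by (simp add: power2_eq_square algebra_simps)

section \<open>The regularized potential near \<open>P\<^sub>2\<close>\<close>

(* With x = pi_1(u) and r = |u|^2 one has D = |pi(u) + e_1| = sqrt (1 + 2x + r^2); the two bounds are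
   second-order Taylor remainders of 1/D and of its radial derivative. *)
lemma inverse_root_expansion_bounds:
  fixes x r D :: real
  assumes D2: "D^2 = 1 + 2*x + r^2" and Dp: "0 < D" and xr: "\<bar>x\<bar> \<le> r" and r1: "r \<le> 1/10"
  shows "\<bar>1/D + x - 1\<bar> \<le> 3 * r^2" and "\<bar>x - (r^2 + x)/D^3\<bar> \<le> 7 * r^2"
proof -
  have r0: "0 \<le> r" using xr by linarith
  have sq: "(1+r)^2 = 1 + 2*r + r^2" "(1-r)^2 = 1 - 2*r + r^2"
    by (simp_all add: power2_eq_square algebra_simps)
  have x: "x \<le> r" "-r \<le> x" using xr by linarith+
  have hi: "D \<le> 1 + r"
  proof (rule power2_le_imp_le)
    show "D^2 \<le> (1 + r)^2" using D2 sq x by linarith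
  qed (use r0 in linarith)
  have lo: "1 - r \<le> D"
  proof (rule power2_le_imp_le)
    show "(1 - r)^2 \<le> D^2" using D2 sq x by linarith
  qed (use Dp in linarith)
  have D1: "\<bar>D - 1\<bar> \<le> r" using lo hi by linarith
  show "\<bar>1/D + x - 1\<bar> \<le> 3 * r^2"
  proof -
    define N where "N = x*(D-1)*(D+2) - r^2"
    have "\<bar>x*(D-1)*(D+2)\<bar> \<le> r*r*4"
      unfolding abs_mult using D1 xr r0 lo hi r1 by (intro mult_mono) auto
    then have N: "\<bar>N\<bar> \<le> 5 * r^2" unfolding N_def by (simp add: power2_eq_square)
    have N_eq: "N = (1+D)*(1 - D + x*D)"
      unfolding N_def using D2 by (simp add: power2_eq_square algebra_simps)
    have "1/D + x - 1 = (1 - D + x*D) / D" using Dp by (simp add: field_simps)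
    also have "\<dots> = N / ((1+D)*D)" unfolding N_eq using Dp by simp
    also have "\<bar>\<dots>\<bar> = \<bar>N\<bar> / ((1+D)*D)" using Dp by (simp add: abs_mult)
    also have "\<dots> \<le> (5*r^2) / ((19/10)*(9/10))"
    proof -
      have "(19/10)*(9/10) \<le> (1+D)*D" using lo r1 by (intro mult_mono) auto
      then show ?thesis using N by (intro frac_le) auto
    qed
    also have "\<dots> \<le> 3 * r^2" by simp
    finally show ?thesis .
  qed
  show "\<bar>x - (r^2 + x)/D^3\<bar> \<le> 7 * r^2"
  proof -
    define N where "N = x*(D-1)*(D^2+D+1) - r^2"
    have "D^2 \<le> (11/10)^2" using hi r1 Dp by (intro power_mono) auto
    then have "\<bar>D^2 + D + 1\<bar> \<le> 4" using hi r1 Dp by (simp add: abs_of_pos add_pos_pos power2_eq_square)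
    then have "\<bar>x*(D-1)*(D^2+D+1)\<bar> \<le> r*r*4"
      unfolding abs_mult using D1 xr r0 by (intro mult_mono) auto
    then have N: "\<bar>N\<bar> \<le> 5 * r^2" unfolding N_def by (simp add: power2_eq_square)
    have "x - (r^2 + x)/D^3 = N / D^3"
      unfolding N_def using Dp by (simp add: field_simps power2_eq_square power3_eq_cube)
    also have "\<bar>\<dots>\<bar> = \<bar>N\<bar> / D^3" using Dp by (simp add: abs_mult)
    also have "\<dots> \<le> (5*r^2) / ((9/10)^3)"
    proof -
      have "(9/10)^3 \<le> D^3" using lo r1 by (intro power_mono) auto
      then show ?thesis using N by (intro frac_le) auto
    qed
    also have "\<dots> \<le> 7 * r^2" by (simp add: field_simps)
    finally show ?thesis .
  qed
qed

definition KS_potential :: "real \<Rightarrow> real \<Rightarrow> real^4 \<Rightarrow> real \<Rightarrow> real" where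
  "KS_potential \<mu> \<epsilon> u \<phi> =
     (let P = pi_KS u; r = (norm u)^2 in
       (1 - \<mu>) * r * (1 / norm (P + vector [1, 0, 0]) + P$1) + \<mu>
       + (1/2) * r * ((P$1)^2 + (P$2)^2 - (P$3)^2 * \<epsilon> * cos \<phi>)
       + ((1 - \<mu>)^2 / 2) * r)"

lemma K_reg_eq:
  "K_reg \<mu> \<epsilon> u \<phi> U \<Phi> =
     (norm (U - b_KS u))^2 / 8 - KS_potential \<mu> \<epsilon> u \<phi> / (1 + \<epsilon> * cos \<phi>) + \<Phi> * (norm u)^2"
  by (simp add: K_reg_def KS_potential_def Let_def)

lemma Gamma_fn_eq: "Gamma_fn \<mu> \<epsilon> \<phi> \<Phi> = - \<Phi> + (3 - 4*\<mu> + \<mu>^2) / 2 / (1 + \<epsilon> * cos \<phi>)"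
  by (simp add: Gamma_fn_def)

lemma pi_KS_bounds_near_origin:
  fixes u :: "real^4"
  defines "r \<equiv> (norm u)^2" and "P \<equiv> pi_KS u"
  defines "D \<equiv> norm (P + vector [1, 0, 0])"
  assumes small: "r \<le> 1/10" and ec: "\<bar>\<epsilon> * cos \<phi>\<bar> \<le> 1"
  shows "\<bar>P$1\<bar> \<le> r" and "D^2 = 1 + 2 * P$1 + r^2" and "0 < D"
    and "\<bar>(P$1)^2 + (P$2)^2 - (P$3)^2 * \<epsilon> * cos \<phi>\<bar> \<le> r^2"
    and "(P$3)^2 \<le> r^2"
proof -
  have normP: "norm P = r" unfolding P_def r_def by (rule norm_pi_KS)
  have Psq: "(P$1)^2 + (P$2)^2 + (P$3)^2 = r^2"
    using normP norm_vec3_sq[of P] by simp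
  show P1: "\<bar>P$1\<bar> \<le> r" using component_le_norm_cart[of P 1] normP by simp
  show D2: "D^2 = 1 + 2 * P$1 + r^2" unfolding D_def norm_add_e1_sq normP by simp
  have "0 < 1 + 2 * P$1 + r^2"
    using P1 small zero_le_power2[of r] abs_ge_minus_self[of "P$1"] by linarith
  then show "0 < D" using D2 unfolding D_def by fastforce
  have "\<bar>(P$3)^2 * (\<epsilon> * cos \<phi>)\<bar> \<le> (P$3)^2"
    using ec by (simp add: abs_mult mult_left_le)
  then show "\<bar>(P$1)^2 + (P$2)^2 - (P$3)^2 * \<epsilon> * cos \<phi>\<bar> \<le> r^2"
    using Psq by (simp add: mult.assoc abs_le_iff) (smt (verit) zero_le_power2)
  show "(P$3)^2 \<le> r^2" using Psq by (smt (verit) zero_le_power2)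
qed

lemma KS_potential_expansion:
  fixes u :: "real^4"
  defines "r \<equiv> (norm u)^2"
  assumes small: "r \<le> 1/10" and ec: "\<bar>\<epsilon> * cos \<phi>\<bar> \<le> 1" and \<mu>: "0 \<le> \<mu>" "\<mu> \<le> 1"
  shows "\<bar>KS_potential \<mu> \<epsilon> u \<phi> - (3 - 4*\<mu> + \<mu>^2) / 2 * r - \<mu>\<bar> \<le> 4 * r^3"
proof -
  define P where "P = pi_KS u"
  define D where "D = norm (P + vector [1, 0, 0])"
  define Q where "Q = (P$1)^2 + (P$2)^2 - (P$3)^2 * \<epsilon> * cos \<phi>"
  note near = pi_KS_bounds_near_origin[OF small[unfolded r_def] ec,
      folded r_def, folded P_def, folded D_def, folded Q_def]
  have r0: "0 \<le> r" unfolding r_def by simp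
  have "\<bar>(1-\<mu>) * (1/D + P$1 - 1)\<bar> \<le> \<bar>1/D + P$1 - 1\<bar>"
    using \<mu> by (simp add: abs_mult mult_left_le_one_le)
  also have "\<dots> \<le> 3 * r^2"
    using inverse_root_expansion_bounds(1)[OF near(2) near(3) near(1) small] .
  finally have B: "\<bar>(1-\<mu>) * (1/D + P$1 - 1) + Q/2\<bar> \<le> 4 * r^2" using near(4) by linarith
  have "KS_potential \<mu> \<epsilon> u \<phi> - (3 - 4*\<mu> + \<mu>^2) / 2 * r - \<mu> = r * ((1-\<mu>) * (1/D + P$1 - 1) + Q/2)"
    unfolding KS_potential_def Let_def P_def[symmetric] r_def[symmetric] D_def[symmetric] Q_def
    using near(3) by (simp add: field_simps power2_eq_square)
  also have "\<bar>\<dots>\<bar> \<le> r * (4 * r^2)" unfolding abs_mult abs_of_nonneg[OF r0] using B r0 by (rule mult_left_mono)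
  finally show ?thesis by (simp add: power2_eq_square power3_eq_cube)
qed

lemma KS_potential_radial_derivative:
  fixes u :: "real^4"
  defines "r \<equiv> (norm u)^2"
  assumes small: "r \<le> 1/10" and ec: "\<bar>\<epsilon> * cos \<phi>\<bar> \<le> 1" and \<mu>: "0 \<le> \<mu>" "\<mu> \<le> 1"
  obtains dE where "((\<lambda>t. KS_potential \<mu> \<epsilon> (u + t *\<^sub>R u) \<phi>) has_real_derivative dE) (at 0)"
    and "\<bar>dE - 2 * KS_potential \<mu> \<epsilon> u \<phi> + 2 * \<mu>\<bar> \<le> 16 * r^3"
proof -
  define P where "P = pi_KS u"
  define D where "D = norm (P + vector [1, 0, 0])"
  define Q where "Q = (P$1)^2 + (P$2)^2 - (P$3)^2 * \<epsilon> * cos \<phi>"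
  note near = pi_KS_bounds_near_origin[OF small[unfolded r_def] ec,
      folded r_def, folded P_def, folded D_def, folded Q_def]
  have r0: "0 \<le> r" unfolding r_def by simp
  have pos: "0 < r^2 + 2 * P$1 + 1"
    using near(2) near(3) zero_less_power2[of D] by simp
  have D_eq: "D = sqrt (r^2 + 2 * P$1 + 1)"
    using near(2) near(3) by (metis add.commute add.left_commute less_eq_real_def real_sqrt_unique)
  have scaled: "KS_potential \<mu> \<epsilon> ((1+t) *\<^sub>R u) \<phi> =
      (1-\<mu>) * ((1+t)^2 * r) * (1 / sqrt (((1+t)^2)^2 * r^2 + 2 * ((1+t)^2 * P$1) + 1) + (1+t)^2 * P$1)
      + \<mu> + 1/2 * ((1+t)^2 * r) * (((1+t)^2)^2 * Q) + (1-\<mu>)^2/2 * ((1+t)^2 * r)" for t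
  proof -
    have r_scaled: "(norm ((1+t) *\<^sub>R u))^2 = (1+t)^2 * r" by (simp add: r_def power_mult_distrib)
    have "(norm ((1+t)^2 *\<^sub>R P + vector [1, 0, 0]))^2 = ((1+t)^2)^2 * r^2 + 2 * ((1+t)^2 * P$1) + 1"
      unfolding norm_add_e1_sq by (simp add: P_def r_def norm_pi_KS power_mult_distrib)
    then have "norm ((1+t)^2 *\<^sub>R P + vector [1, 0, 0]) = sqrt (((1+t)^2)^2 * r^2 + 2 * ((1+t)^2 * P$1) + 1)"
      by (metis norm_ge_zero real_sqrt_unique)
    then show ?thesis
      unfolding KS_potential_def Let_def r_scaled pi_KS_scaleR P_def[symmetric]
      by (simp del: pi_KS_nth add: r_def Q_def algebra_simps)
  qed
  define dE where "dE = (1-\<mu>) * (2*r*(1/D + P$1) + r*(-(2*r^2 + 2*P$1)/D^3 + 2*P$1)) + 3*r*Q + (1-\<mu>)^2*r"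
  have radial: "u + t *\<^sub>R u = (1+t) *\<^sub>R u" for t by (simp add: algebra_simps)
  have "((\<lambda>t. KS_potential \<mu> \<epsilon> (u + t *\<^sub>R u) \<phi>) has_real_derivative dE) (at 0)"
    unfolding radial scaled dE_def D_eq using near(3) pos
    by (auto intro!: derivative_eq_intros simp: D_eq[symmetric]) (simp add: field_simps power3_eq_cube)
  moreover have "\<bar>dE - 2 * KS_potential \<mu> \<epsilon> u \<phi> + 2 * \<mu>\<bar> \<le> 16 * r^3"
  proof -
    have "\<bar>(1-\<mu>) * (P$1 - (r^2 + P$1)/D^3)\<bar> \<le> \<bar>P$1 - (r^2 + P$1)/D^3\<bar>"
      using \<mu> by (simp add: abs_mult mult_left_le_one_le)
    also have "\<dots> \<le> 7 * r^2"
      using inverse_root_expansion_bounds(2)[OF near(2) near(3) near(1) small] .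
    finally have H: "\<bar>(1-\<mu>) * (P$1 - (r^2 + P$1)/D^3) + Q\<bar> \<le> 8 * r^2" using near(4) by linarith
    have "dE - 2 * KS_potential \<mu> \<epsilon> u \<phi> + 2 * \<mu> = 2 * r * ((1-\<mu>) * (P$1 - (r^2 + P$1)/D^3) + Q)"
      unfolding dE_def KS_potential_def Let_def P_def[symmetric] r_def[symmetric] D_def[symmetric] Q_def
      using near(3) by (simp add: field_simps power2_eq_square)
    also have "\<bar>\<dots>\<bar> = 2 * r * \<bar>(1-\<mu>) * (P$1 - (r^2 + P$1)/D^3) + Q\<bar>"
      using r0 by (simp add: abs_mult)
    also have "\<dots> \<le> 2 * r * (8 * r^2)" using H r0 by (intro mult_left_mono) auto
    finally show ?thesis by (simp add: power2_eq_square power3_eq_cube)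
  qed
  ultimately show ?thesis by (rule that)
qed

section \<open>Derivatives along the regularized flow\<close>

lemma has_derivative_directional:
  fixes F :: "'a::real_normed_vector \<Rightarrow> real"
  assumes "(F has_derivative L) (at x)"
    and "((\<lambda>t. F (x + t *\<^sub>R v)) has_real_derivative d) (at 0)"
  shows "L v = d"
proof -
  have "((\<lambda>t. x + t *\<^sub>R v) has_derivative (\<lambda>t. t *\<^sub>R v)) (at 0)"
    by (auto intro!: derivative_eq_intros)
  then have "((F \<circ> (\<lambda>t. x + t *\<^sub>R v)) has_derivative L \<circ> (\<lambda>t. t *\<^sub>R v)) (at 0)"
    using assms(1) by (intro diff_chain_at) simp_all
  moreover have "((F \<circ> (\<lambda>t. x + t *\<^sub>R v)) has_derivative (*) d) (at 0)"
    using assms(2) by (simp add: has_field_derivative_def comp_def)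
  ultimately have "L \<circ> (\<lambda>t. t *\<^sub>R v) = (*) d" by (rule has_derivative_unique)
  then show ?thesis by (metis comp_apply mult.right_neutral scaleR_one)
qed

lemma hamiltonian_solutionE:
  assumes "hamiltonian_solution H x p S" and "t \<in> S"
  obtains dx dp where "(x has_vector_derivative dx) (at t within S)"
    and "(p has_vector_derivative dp) (at t within S)"
    and "\<And>v d. ((\<lambda>\<tau>. H t (x t) (p t + \<tau> *\<^sub>R v)) has_real_derivative d) (at 0) \<Longrightarrow> dx \<bullet> v = d"
    and "\<And>v d. ((\<lambda>\<tau>. H t (x t + \<tau> *\<^sub>R v) (p t)) has_real_derivative d) (at 0) \<Longrightarrow> dp \<bullet> v = - d"
proof -
  obtain dx dp where dx: "(x has_vector_derivative dx) (at t within S)"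
    and dp: "(p has_vector_derivative dp) (at t within S)"
    and Hp: "((\<lambda>y. H t (x t) y) has_derivative (\<lambda>h. dx \<bullet> h)) (at (p t))"
    and Hx: "((\<lambda>y. H t y (p t)) has_derivative (\<lambda>h. - (dp \<bullet> h))) (at (x t))"
    using assms unfolding hamiltonian_solution_def by blast
  show ?thesis
  proof (rule that[OF dx dp])
    show "dx \<bullet> v = d" if "((\<lambda>\<tau>. H t (x t) (p t + \<tau> *\<^sub>R v)) has_real_derivative d) (at 0)" for v d
      using has_derivative_directional[OF Hp that] .
    show "dp \<bullet> v = - d" if "((\<lambda>\<tau>. H t (x t + \<tau> *\<^sub>R v) (p t)) has_real_derivative d) (at 0)" for v d
      using has_derivative_directional[OF Hx that] by simp
  qed
qed

lemma hamiltonian_solution_continuous: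
  assumes "hamiltonian_solution H x p S"
  shows "continuous_on S x" and "continuous_on S p"
  using assms unfolding hamiltonian_solution_def continuous_on_eq_continuous_within
  by (meson has_vector_derivative_continuous)+

lemma has_vector_derivative_fst:
  "(f has_vector_derivative f') F \<Longrightarrow> ((\<lambda>x. fst (f x)) has_vector_derivative fst f') F"
  unfolding has_vector_derivative_def by (drule has_derivative_fst) simp

lemma has_vector_derivative_snd:
  "(f has_vector_derivative f') F \<Longrightarrow> ((\<lambda>x. snd (f x)) has_vector_derivative snd f') F"
  unfolding has_vector_derivative_def by (drule has_derivative_snd) simp

lemma norm_add_sq: "(norm (a + b :: 'a::real_inner))^2 = (norm a)^2 + 2 * inner a b + (norm b)^2"
  by (simp add: power2_norm_eq_inner inner_add_left inner_add_right inner_commute)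

lemma norm_diff_sq: "(norm (a - b :: 'a::real_inner))^2 = (norm a)^2 - 2 * inner a b + (norm b)^2"
  by (simp add: power2_norm_eq_inner inner_diff_left inner_diff_right inner_commute)

lemma K_reg_has_derivative_momentum:
  "((\<lambda>\<tau>. K_reg \<mu> \<epsilon> u \<phi> (U + \<tau> *\<^sub>R U) \<Phi>) has_real_derivative inner (U - b_KS u) U / 4) (at 0)"
proof -
  have "(norm (U + \<tau> *\<^sub>R U - b_KS u))^2
      = (norm (U - b_KS u))^2 + 2 * \<tau> * inner (U - b_KS u) U + \<tau>^2 * (norm U)^2" for \<tau>
  proof -
    have "U + \<tau> *\<^sub>R U - b_KS u = (U - b_KS u) + \<tau> *\<^sub>R U" by (simp add: algebra_simps)
    then show ?thesis by (simp only: norm_add_sq) (simp add: power_mult_distrib)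
  qed
  then show ?thesis
    unfolding K_reg_eq by (auto intro!: derivative_eq_intros)
qed

lemma K_reg_has_derivative_radial:
  assumes "((\<lambda>t. KS_potential \<mu> \<epsilon> (u + t *\<^sub>R u) \<phi>) has_real_derivative dE) (at 0)"
    and "1 + \<epsilon> * cos \<phi> \<noteq> 0"
  shows "((\<lambda>\<tau>. K_reg \<mu> \<epsilon> (u + \<tau> *\<^sub>R u) \<phi> U \<Phi>) has_real_derivative
      - 3/4 * inner (U - b_KS u) (b_KS u) - dE / (1 + \<epsilon> * cos \<phi>) + 2 * \<Phi> * (norm u)^2) (at 0)"
proof -
  have radial: "u + \<tau> *\<^sub>R u = (1 + \<tau>) *\<^sub>R u" for \<tau> by (simp add: algebra_simps)
  have b: "(norm (U - b_KS (u + \<tau> *\<^sub>R u)))^2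
      = (norm U)^2 - 2 * (1 + \<tau>)^3 * inner U (b_KS u) + ((1 + \<tau>)^3)^2 * (norm (b_KS u))^2" for \<tau>
    unfolding radial b_KS_scaleR norm_diff_sq by (simp add: power_mult_distrib)
  have r: "(norm (u + \<tau> *\<^sub>R u))^2 = (1 + \<tau>)^2 * (norm u)^2" for \<tau>
    unfolding radial by (simp add: power_mult_distrib)
  define \<rho> where "\<rho> = 1 + \<epsilon> * cos \<phi>"
  have "\<rho> \<noteq> 0" using assms(2) unfolding \<rho>_def .
  then show ?thesis
    unfolding K_reg_eq b r \<rho>_def[symmetric]
    by (auto intro!: derivative_eq_intros assms(1) simp: power2_norm_eq_inner)
      (simp add: field_simps inner_diff_left)
qed

lemma KS_potential_has_derivative_phi:
  "((\<lambda>\<tau>. KS_potential \<mu> \<epsilon> u (\<phi> + \<tau>)) has_real_derivative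
      (norm u)^2 * (pi_KS u $ 3)^2 * \<epsilon> * sin \<phi> / 2) (at 0)"
  unfolding KS_potential_def Let_def
  by (auto intro!: derivative_eq_intros simp del: pi_KS_nth)

lemma K_reg_has_derivative_phi:
  assumes "1 + \<epsilon> * cos \<phi> \<noteq> 0"
  shows "((\<lambda>\<tau>. K_reg \<mu> \<epsilon> u (\<phi> + \<tau>) U \<Phi>) has_real_derivative
      (- ((norm u)^2 * (pi_KS u $ 3)^2 * \<epsilon> * sin \<phi> / (2 * (1 + \<epsilon> * cos \<phi>)))
       - KS_potential \<mu> \<epsilon> u \<phi> * \<epsilon> * sin \<phi> / (1 + \<epsilon> * cos \<phi>)^2)) (at 0)"
proof -
  define \<rho> where "\<rho> = 1 + \<epsilon> * cos \<phi>"
  have "\<rho> \<noteq> 0" using assms unfolding \<rho>_def .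
  then show ?thesis
    unfolding K_reg_eq \<rho>_def[symmetric]
    by (auto intro!: derivative_eq_intros KS_potential_has_derivative_phi
        simp del: pi_KS_nth simp: \<rho>_def[symmetric])
      (simp del: pi_KS_nth add: field_simps power2_eq_square)
qed

lemma Gamma_has_derivative_along_solution:
  fixes u U :: "real \<Rightarrow> real^4" and \<phi> \<Phi> :: "real \<Rightarrow> real" and \<mu> \<epsilon> s :: real
  defines "\<rho> \<equiv> 1 + \<epsilon> * cos (\<phi> s)" and "r \<equiv> (norm (u s))^2"
  assumes ham: "hamiltonian_solution (K_ham \<mu> \<epsilon>) (\<lambda>s. (u s, \<phi> s)) (\<lambda>s. (U s, \<Phi> s)) S"
    and s: "s \<in> S" and \<phi>': "(\<phi> has_real_derivative r) (at s within S)" and \<rho>: "\<rho> \<noteq> 0"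
  shows "((\<lambda>s. Gamma_fn \<mu> \<epsilon> (\<phi> s) (\<Phi> s)) has_real_derivative
      - \<epsilon> * sin (\<phi> s) / \<rho>^2 * (KS_potential \<mu> \<epsilon> (u s) (\<phi> s) - (3 - 4*\<mu> + \<mu>^2) / 2 * r)
      - r * (pi_KS (u s) $ 3)^2 * \<epsilon> * sin (\<phi> s) / (2 * \<rho>)) (at s within S)"
proof -
  obtain dp where dp: "((\<lambda>s. (U s, \<Phi> s)) has_vector_derivative dp) (at s within S)"
    and K_pos: "\<And>v d. ((\<lambda>\<tau>. K_ham \<mu> \<epsilon> s ((u s, \<phi> s) + \<tau> *\<^sub>R v) (U s, \<Phi> s))
        has_real_derivative d) (at 0) \<Longrightarrow> dp \<bullet> v = - d"
    by (rule hamiltonian_solutionE[OF ham s]) blast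
  have \<Phi>': "(\<Phi> has_real_derivative snd dp) (at s within S)"
    using has_vector_derivative_snd[OF dp] by (simp add: has_real_derivative_iff_has_vector_derivative)
  \<comment> \<open>\<open>\<Phi>' = -\<partial>K/\<partial>\<phi>\<close>; since \<open>\<phi>' = r\<close>, the term \<open>C/\<rho>(\<phi>)\<close> of \<open>\<Gamma>\<close> turns \<open>E\<close> into \<open>E - C r\<close>\<close>
  have snd_dp: "dp \<bullet> (0, 1) = - (- (r * (pi_KS (u s) $ 3)^2 * \<epsilon> * sin (\<phi> s) / (2 * \<rho>))
      - KS_potential \<mu> \<epsilon> (u s) (\<phi> s) * \<epsilon> * sin (\<phi> s) / \<rho>^2)"
    by (rule K_pos)
      (use K_reg_has_derivative_phi[OF \<rho>[unfolded \<rho>_def], of \<mu> "u s" "U s" "\<Phi> s"] in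
        \<open>simp add: K_ham_def r_def \<rho>_def\<close>)
  define C where "C = (3 - 4*\<mu> + \<mu>^2) / 2"
  have "((\<lambda>s. Gamma_fn \<mu> \<epsilon> (\<phi> s) (\<Phi> s)) has_real_derivative
      - snd dp + C * \<epsilon> * sin (\<phi> s) * r / \<rho>^2) (at s within S)"
    unfolding Gamma_fn_eq C_def[symmetric] using \<rho>
    by (auto intro!: derivative_eq_intros \<Phi>' \<phi>' simp: \<rho>_def[symmetric])
      (simp add: field_simps power2_eq_square)
  then show ?thesis
    by (rule DERIV_cong)
      (use snd_dp \<rho> in \<open>simp del: pi_KS_nth add: inner_Pair_0 C_def field_simps power2_eq_square\<close>)
qed

lemma virial_has_derivative_along_solution:
  fixes u U :: "real \<Rightarrow> real^4" and \<phi> \<Phi> :: "real \<Rightarrow> real" and \<mu> \<epsilon> s :: real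
  defines "\<rho> \<equiv> 1 + \<epsilon> * cos (\<phi> s)" and "b \<equiv> b_KS (u s)"
  assumes ham: "hamiltonian_solution (K_ham \<mu> \<epsilon>) (\<lambda>s. (u s, \<phi> s)) (\<lambda>s. (U s, \<Phi> s)) S"
    and s: "s \<in> S" and \<rho>: "\<rho> \<noteq> 0"
    and dE: "((\<lambda>t. KS_potential \<mu> \<epsilon> (u s + t *\<^sub>R u s) (\<phi> s)) has_real_derivative dE) (at 0)"
  shows "((\<lambda>s. inner (u s) (U s)) has_real_derivative
      (norm (U s - b))^2 / 4 + inner (U s - b) b + dE / \<rho> - 2 * \<Phi> s * (norm (u s))^2) (at s within S)"
proof -
  obtain dx dp where dx: "((\<lambda>s. (u s, \<phi> s)) has_vector_derivative dx) (at s within S)"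
    and dp: "((\<lambda>s. (U s, \<Phi> s)) has_vector_derivative dp) (at s within S)"
    and K_mom: "\<And>v d. ((\<lambda>\<tau>. K_ham \<mu> \<epsilon> s (u s, \<phi> s) ((U s, \<Phi> s) + \<tau> *\<^sub>R v))
        has_real_derivative d) (at 0) \<Longrightarrow> dx \<bullet> v = d"
    and K_pos: "\<And>v d. ((\<lambda>\<tau>. K_ham \<mu> \<epsilon> s ((u s, \<phi> s) + \<tau> *\<^sub>R v) (U s, \<Phi> s))
        has_real_derivative d) (at 0) \<Longrightarrow> dp \<bullet> v = - d"
    by (rule hamiltonian_solutionE[OF ham s]) blast
  have u': "(u has_derivative (\<lambda>h. h *\<^sub>R fst dx)) (at s within S)"
    using has_vector_derivative_fst[OF dx] by (simp add: has_vector_derivative_def)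
  have U': "(U has_derivative (\<lambda>h. h *\<^sub>R fst dp)) (at s within S)"
    using has_vector_derivative_fst[OF dp] by (simp add: has_vector_derivative_def)
  have "dx \<bullet> (U s, 0) = inner (U s - b) (U s) / 4"
    by (rule K_mom) (simp add: K_ham_def b_def K_reg_has_derivative_momentum)
  moreover have "dp \<bullet> (u s, 0) = - (- 3/4 * inner (U s - b) b - dE / \<rho> + 2 * \<Phi> s * (norm (u s))^2)"
    by (rule K_pos)
      (use K_reg_has_derivative_radial[OF dE \<rho>[unfolded \<rho>_def], of "U s" "\<Phi> s"] in
        \<open>simp add: K_ham_def b_def \<rho>_def\<close>)
  moreover have "inner (U s - b) (U s) = (norm (U s - b))^2 + inner (U s - b) b"
    by (simp add: power2_norm_eq_inner inner_diff_left inner_diff_right inner_commute)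
  ultimately have "inner (u s) (fst dp) + inner (fst dx) (U s)
      = (norm (U s - b))^2 / 4 + inner (U s - b) b + dE / \<rho> - 2 * \<Phi> s * (norm (u s))^2"
    by (simp add: inner_Pair_0 inner_commute)
  moreover have "((\<lambda>s. inner (u s) (U s)) has_derivative
      (\<lambda>h. (inner (u s) (fst dp) + inner (fst dx) (U s)) * h)) (at s within S)"
    using has_derivative_inner[OF u' U'] by (simp add: algebra_simps)
  ultimately show ?thesis
    by (simp add: has_field_derivative_def)
qed

section \<open>Estimates inside the band\<close>

lemma eps_cos_sin_bounds:
  fixes \<epsilon> \<phi> :: real
  assumes "0 < \<epsilon>" "\<epsilon> < 1"
  shows "\<bar>\<epsilon> * cos \<phi>\<bar> \<le> 1" and "\<bar>\<epsilon> * sin \<phi>\<bar> \<le> 1"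
    and "1 - \<epsilon> \<le> 1 + \<epsilon> * cos \<phi>" and "1 + \<epsilon> * cos \<phi> \<le> 2"
proof -
  have c: "\<bar>\<epsilon> * cos \<phi>\<bar> \<le> \<epsilon>"
    using assms abs_cos_le_one[of \<phi>] by (simp add: abs_mult mult_left_le)
  have s: "\<bar>\<epsilon> * sin \<phi>\<bar> \<le> \<epsilon>"
    using assms abs_sin_le_one[of \<phi>] by (simp add: abs_mult mult_left_le)
  show "\<bar>\<epsilon> * cos \<phi>\<bar> \<le> 1" "\<bar>\<epsilon> * sin \<phi>\<bar> \<le> 1" using c s assms by linarith+
  show "1 - \<epsilon> \<le> 1 + \<epsilon> * cos \<phi>" "1 + \<epsilon> * cos \<phi> \<le> 2"
    using abs_le_D1[OF c] abs_le_D2[OF c] assms by linarith+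
qed

lemma kinetic_term_on_zero_level:
  fixes u U :: "real^4" and \<mu> \<epsilon> \<phi> \<Phi> :: real
  defines "\<rho> \<equiv> 1 + \<epsilon> * cos \<phi>" and "r \<equiv> (norm u)^2" and "E \<equiv> KS_potential \<mu> \<epsilon> u \<phi>"
  assumes K0: "K_reg \<mu> \<epsilon> u \<phi> U \<Phi> = 0" and \<rho>: "\<rho> \<noteq> 0"
  shows "(norm (U - b_KS u))^2 = 8 * ((E - (3 - 4*\<mu> + \<mu>^2) / 2 * r) / \<rho> + Gamma_fn \<mu> \<epsilon> \<phi> \<Phi> * r)"
    and "2 * \<Phi> * r = 2 * E / \<rho> - (norm (U - b_KS u))^2 / 4"
proof -
  have K0': "(norm (U - b_KS u))^2 / 8 - E / \<rho> + \<Phi> * r = 0"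
    using K0 unfolding K_reg_eq E_def \<rho>_def r_def .
  then show "2 * \<Phi> * r = 2 * E / \<rho> - (norm (U - b_KS u))^2 / 4" by argo
  define C where "C = (3 - 4*\<mu> + \<mu>^2) / 2"
  have "(norm (U - b_KS u))^2 = 8 * (E / \<rho> - \<Phi> * r)" using K0' by argo
  also have "\<dots> = 8 * ((E - C * r) / \<rho> + Gamma_fn \<mu> \<epsilon> \<phi> \<Phi> * r)"
    unfolding Gamma_fn_eq C_def[symmetric] \<rho>_def[symmetric] using \<rho> by (simp add: field_simps)
  finally show "(norm (U - b_KS u))^2 = 8 * ((E - (3 - 4*\<mu> + \<mu>^2) / 2 * r) / \<rho> + Gamma_fn \<mu> \<epsilon> \<phi> \<Phi> * r)"
    unfolding C_def .
qed

lemma radius_small_in_band: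
  fixes e r m \<Gamma> \<Gamma>0 :: real
  assumes e: "0 < e" "e \<le> 1" and r: "0 \<le> r" "r \<le> m" and small: "m^2 \<le> e^4 * \<Gamma>0 / 10000"
    and \<Gamma>: "\<Gamma>0/2 \<le> \<Gamma>"
  shows "48 * r^2 \<le> e * \<Gamma>"
proof -
  have "0 \<le> e^4 * \<Gamma>0" using small zero_le_power2[of m] by linarith
  then have \<Gamma>0: "0 \<le> \<Gamma>0" using e by (simp add: zero_le_mult_iff)
  have "r^2 \<le> m^2" using r by (intro power_mono) auto
  also have "\<dots> \<le> e^4 * \<Gamma>0 / 10000" using small .
  also have "\<dots> \<le> e * \<Gamma>0 / 10000"
    using e \<Gamma>0 power_decreasing[of 1 4 e] by (intro divide_right_mono mult_right_mono) auto
  finally have "r^2 \<le> e * \<Gamma>0 / 10000" .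
  moreover have "0 \<le> e * \<Gamma>0" using e \<Gamma>0 by simp
  ultimately have "48 * r^2 \<le> e * \<Gamma>0 / 2" by linarith
  also have "\<dots> \<le> e * \<Gamma>" using \<Gamma> e by (simp add: mult_left_mono)
  finally show ?thesis .
qed

lemma Gamma_rate_bound:
  fixes e \<rho> \<sigma> \<mu> r A P3 \<Gamma> :: real
  assumes e: "0 < e" "e \<le> \<rho>" "\<rho> \<le> 2" and \<sigma>: "\<bar>\<sigma>\<bar> \<le> 1" and \<mu>: "0 \<le> \<mu>" and r: "0 \<le> r"
    and P3: "P3^2 \<le> r^2" and A: "\<bar>A - \<mu>\<bar> \<le> 4 * r^3" and small: "5 * r^2 \<le> e * \<Gamma>"
  shows "\<bar>- \<sigma> / \<rho>^2 * A - r * P3^2 * \<sigma> / (2 * \<rho>)\<bar> \<le> (\<mu> / \<rho> + \<Gamma> * r) / e"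
proof -
  have \<rho>: "0 < \<rho>" using e by linarith
  have A': "\<bar>A\<bar> \<le> \<mu> + 4 * r^3" using A \<mu> by arith
  have "\<bar>\<sigma> / \<rho>^2 * A\<bar> = \<bar>\<sigma>\<bar> * \<bar>A\<bar> / \<rho>^2" by (simp add: abs_mult)
  also have "\<dots> \<le> 1 * (\<mu> + 4 * r^3) / (\<rho> * e)"
  proof (rule frac_le)
    show "\<bar>\<sigma>\<bar> * \<bar>A\<bar> \<le> 1 * (\<mu> + 4 * r^3)" using \<sigma> A' by (intro mult_mono) auto
    show "\<rho> * e \<le> \<rho>^2" using e \<rho> by (simp add: power2_eq_square)
  qed (use \<mu> r e \<rho> in auto)
  finally have t1: "\<bar>\<sigma> / \<rho>^2 * A\<bar> \<le> (\<mu> + 4 * r^3) / (\<rho> * e)" by simp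
  have "\<bar>r * P3^2 * \<sigma> / (2 * \<rho>)\<bar> = r * P3^2 * \<bar>\<sigma>\<bar> / (2 * \<rho>)" using r \<rho> by (simp add: abs_mult)
  also have "\<dots> \<le> r * r^2 * 1 / (\<rho> * e)"
  proof (rule frac_le)
    show "r * P3^2 * \<bar>\<sigma>\<bar> \<le> r * r^2 * 1" using r P3 \<sigma> by (intro mult_mono) auto
    show "\<rho> * e \<le> 2 * \<rho>" using e \<rho> by simp
  qed (use r e \<rho> in auto)
  finally have t2: "\<bar>r * P3^2 * \<sigma> / (2 * \<rho>)\<bar> \<le> r^3 / (\<rho> * e)" by (simp add: power3_eq_cube power2_eq_square)
  have "5 * r^3 \<le> \<rho> * \<Gamma> * r"
  proof -
    have "5 * r^2 \<le> \<rho> * \<Gamma>" using small e \<rho> by (smt (verit) mult_right_mono zero_le_power2 zero_le_mult_iff)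
    then have "5 * r^2 * r \<le> \<rho> * \<Gamma> * r" using r by (rule mult_right_mono)
    then show ?thesis by (simp add: power2_eq_square power3_eq_cube)
  qed
  then have t3: "5 * r^3 / (\<rho> * e) \<le> \<Gamma> * r / e" using \<rho> e by (simp add: field_simps)
  have "\<bar>- \<sigma> / \<rho>^2 * A - r * P3^2 * \<sigma> / (2 * \<rho>)\<bar> \<le> \<bar>\<sigma> / \<rho>^2 * A\<bar> + \<bar>r * P3^2 * \<sigma> / (2 * \<rho>)\<bar>"
    by (simp add: abs_triangle_ineq4 order_trans[OF abs_triangle_ineq4])
  also have "\<dots> \<le> \<mu> / (\<rho> * e) + 5 * r^3 / (\<rho> * e)"
    using t1 t2 by (simp add: add_divide_distrib)
  also have "\<dots> \<le> (\<mu> / \<rho> + \<Gamma> * r) / e" using t3 by (simp add: add_divide_distrib)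
  finally show ?thesis .
qed

lemma virial_rate_lower_bound:
  fixes \<rho> \<mu> r \<Gamma> A R VV Vb bb :: real
  assumes \<rho>: "0 < \<rho>" "\<rho> \<le> 2" and r: "0 \<le> r" and \<Gamma>: "48 * r^2 \<le> \<rho> * \<Gamma>"
    and VV: "VV = 8 * (A / \<rho> + \<Gamma> * r)" "0 \<le> VV" and A: "\<bar>A - \<mu>\<bar> \<le> 4 * r^3"
    and Vb: "Vb^2 \<le> VV * bb" "0 \<le> bb" "bb \<le> 4 * r^3" and R: "\<bar>R + 2 * \<mu>\<bar> \<le> 16 * r^3"
  shows "7/4 * (\<mu> / \<rho> + \<Gamma> * r) \<le> VV / 2 + Vb + R / \<rho>"
proof -
  have "(\<mu> - 4 * r^3) / \<rho> \<le> A / \<rho>" using A \<rho> by (intro divide_right_mono) auto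
  then have A_lo: "\<mu> / \<rho> - 4 * (r^3 / \<rho>) \<le> A / \<rho>" by (simp add: diff_divide_distrib)
  have "(- 2 * \<mu> - 16 * r^3) / \<rho> \<le> R / \<rho>" using R \<rho> by (intro divide_right_mono) auto
  then have R_lo: "- 2 * (\<mu> / \<rho>) - 16 * (r^3 / \<rho>) \<le> R / \<rho>" by (simp add: diff_divide_distrib)
  have "r^3 * \<rho> \<le> r^3 * 2" using \<rho> r by (intro mult_left_mono) auto
  then have r3: "r^3 \<le> 2 * (r^3 / \<rho>)" using \<rho> by (simp add: field_simps)
  have "48 * r^2 * r \<le> \<rho> * \<Gamma> * r" using \<Gamma> r by (rule mult_right_mono)
  then have T: "48 * (r^3 / \<rho>) \<le> \<Gamma> * r" using \<rho> by (simp add: field_simps power2_eq_square power3_eq_cube)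
  \<comment> \<open>AM-GM: \<open>\<bar>Vb\<bar> \<le> \<surd>(VV * bb) \<le> VV/32 + 8 * bb\<close>\<close>
  have Vb_sq: "Vb^2 \<le> (VV/32 + 8 * bb)^2"
    using Vb(1) sum_squares_ge_zero[of "VV/32 - 8 * bb" 0] by (simp add: power2_eq_square algebra_simps)
  have "\<bar>Vb\<bar> \<le> VV/32 + 8 * bb"
  proof (rule power2_le_imp_le)
    show "\<bar>Vb\<bar>^2 \<le> (VV/32 + 8 * bb)^2" using Vb_sq by simp
  qed (use VV(2) Vb(2) in simp)
  then have "- (VV/32 + 8 * bb) \<le> Vb" by linarith
  moreover have "0 \<le> r^3 / \<rho>" using r \<rho> by simp
  ultimately show ?thesis using A_lo R_lo r3 T VV(1) Vb(3) by argo
qed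

lemma virial_bound:
  fixes e \<rho> \<mu> m r \<Gamma> \<Gamma>0 A VV W :: real
  assumes e: "0 < e" "e \<le> 1" "e \<le> \<rho>" and r: "0 \<le> r" "r \<le> m" and \<mu>: "\<mu> = m^3"
    and \<Gamma>: "0 \<le> \<Gamma>" "\<Gamma> \<le> 3 * \<Gamma>0 / 2" and small: "m^2 \<le> e^4 * \<Gamma>0 / 10000"
    and VV: "VV = 8 * (A / \<rho> + \<Gamma> * r)" and A: "\<bar>A - \<mu>\<bar> \<le> 4 * r^3" and W: "W^2 \<le> r * VV"
  shows "\<bar>W\<bar> \<le> e * \<Gamma>0 / 8"
proof -
  have m: "0 \<le> m" using r by linarith
  have "0 \<le> e^4 * \<Gamma>0" using small zero_le_power2[of m] by linarith
  then have \<Gamma>0: "0 \<le> \<Gamma>0" using e by (simp add: zero_le_mult_iff)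
  have \<rho>: "0 < \<rho>" using e by linarith
  have "r * A / \<rho> \<le> r * (\<mu> + 4 * r^3) / e"
  proof (rule frac_le)
    show "r * A \<le> r * (\<mu> + 4 * r^3)" using A r by (intro mult_left_mono) auto
  qed (use r m \<mu> e in auto)
  also have "\<dots> \<le> m * (m^3 + 4 * m^3) / e"
    using r m \<mu> e by (intro divide_right_mono mult_mono add_mono power_mono) auto
  also have "\<dots> = 5 * m^4 / e" by (simp add: power4_eq_xxxx power3_eq_cube algebra_simps)
  finally have "r * A / \<rho> \<le> 5 * m^4 / e" .
  moreover have "\<Gamma> * r^2 \<le> 3 * \<Gamma>0 / 2 * m^2"
    using \<Gamma> r by (intro mult_mono power_mono) auto
  moreover have "r * VV = 8 * (r * A / \<rho>) + 8 * (\<Gamma> * r^2)"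
    unfolding VV by (simp add: algebra_simps power2_eq_square)
  ultimately have W2: "W^2 \<le> 40 * (m^4 / e) + 12 * (\<Gamma>0 * m^2)"
    using W by linarith
  have "m^4 = (m^2)^2" by simp
  also have "\<dots> \<le> (e^4 * \<Gamma>0 / 10000)^2" using small by (rule power_mono) simp
  finally have "m^4 / e \<le> (e^4 * \<Gamma>0 / 10000)^2 / e" using e by (simp add: divide_right_mono)
  also have "\<dots> = e^7 * \<Gamma>0^2 / 100000000" using e by (simp add: power2_eq_square power_def)
  also have "\<dots> \<le> e^2 * \<Gamma>0^2 / 100000000" using e by (intro divide_right_mono mult_right_mono power_decreasing) auto
  finally have m4: "m^4 / e \<le> e^2 * \<Gamma>0^2 / 100000000" .
  have "\<Gamma>0 * m^2 \<le> \<Gamma>0 * (e^4 * \<Gamma>0 / 10000)" using small \<Gamma>0 by (rule mult_left_mono)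
  also have "\<dots> = e^4 * \<Gamma>0^2 / 10000" by (simp add: power2_eq_square)
  also have "\<dots> \<le> e^2 * \<Gamma>0^2 / 10000"
    using e by (intro divide_right_mono mult_right_mono power_decreasing) auto
  finally have "\<Gamma>0 * m^2 \<le> e^2 * \<Gamma>0^2 / 10000" .
  moreover have "(e * \<Gamma>0 / 8)^2 = e^2 * \<Gamma>0^2 / 64" by (simp add: power_mult_distrib power_divide)
  moreover have "0 \<le> e^2 * \<Gamma>0^2" by simp
  ultimately have W_sq: "W^2 \<le> (e * \<Gamma>0 / 8)^2" using W2 m4 by argo
  show ?thesis
  proof (rule power2_le_imp_le)
    show "\<bar>W\<bar>^2 \<le> (e * \<Gamma>0 / 8)^2" using W_sq by simp
  qed (use e \<Gamma>0 in simp)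
qed

lemma zero_level_near_P2:
  fixes u U :: "real^4" and \<mu> \<epsilon> \<phi> \<Phi> m :: real
  defines "\<rho> \<equiv> 1 + \<epsilon> * cos \<phi>" and "r \<equiv> (norm u)^2"
    and "E \<equiv> KS_potential \<mu> \<epsilon> u \<phi>" and "C \<equiv> (3 - 4*\<mu> + \<mu>^2) / 2"
  assumes \<mu>: "\<mu> = m^3" "m \<le> 1/10" and \<epsilon>: "0 < \<epsilon>" "\<epsilon> < 1"
    and K0: "K_reg \<mu> \<epsilon> u \<phi> U \<Phi> = 0" and near: "r \<le> m"
  shows "0 \<le> r" and "0 \<le> \<mu>" and "1 - \<epsilon> \<le> \<rho>" and "\<rho> \<le> 2" and "(pi_KS u $ 3)^2 \<le> r^2"
    and "\<bar>(E - C * r) - \<mu>\<bar> \<le> 4 * r^3"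
    and "(norm (U - b_KS u))^2 = 8 * ((E - C * r) / \<rho> + Gamma_fn \<mu> \<epsilon> \<phi> \<Phi> * r)"
    and "2 * \<Phi> * r = 2 * E / \<rho> - (norm (U - b_KS u))^2 / 4"
proof -
  note bounds = eps_cos_sin_bounds[OF \<epsilon>, of \<phi>, folded \<rho>_def]
  show r: "0 \<le> r" unfolding r_def by simp
  have r1: "r \<le> 1/10" using near \<mu> by linarith
  show \<mu>0: "0 \<le> \<mu>" using \<mu> r near by simp
  have \<mu>1: "\<mu> \<le> 1" using \<mu> r near by (simp add: power_le_one)
  show "1 - \<epsilon> \<le> \<rho>" "\<rho> \<le> 2" using bounds by simp_all
  show "(pi_KS u $ 3)^2 \<le> r^2"
    using pi_KS_bounds_near_origin(5)[OF r1[unfolded r_def] bounds(1)] unfolding r_def .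
  show "\<bar>(E - C * r) - \<mu>\<bar> \<le> 4 * r^3"
    using KS_potential_expansion[OF r1[unfolded r_def] bounds(1) \<mu>0 \<mu>1] unfolding E_def C_def r_def
    by (simp add: algebra_simps)
  have "1 + \<epsilon> * cos \<phi> \<noteq> 0" using bounds(3) \<epsilon> unfolding \<rho>_def by linarith
  then show "(norm (U - b_KS u))^2 = 8 * ((E - C * r) / \<rho> + Gamma_fn \<mu> \<epsilon> \<phi> \<Phi> * r)"
    and "2 * \<Phi> * r = 2 * E / \<rho> - (norm (U - b_KS u))^2 / 4"
    using kinetic_term_on_zero_level[OF K0] unfolding \<rho>_def r_def E_def C_def by blast+
qed

lemma Gamma_rate_le_virial_rate:
  fixes u U :: "real^4" and \<mu> \<epsilon> \<phi> \<Phi> m \<Gamma>0 dE :: real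
  defines "\<rho> \<equiv> 1 + \<epsilon> * cos \<phi>" and "r \<equiv> (norm u)^2" and "b \<equiv> b_KS u"
    and "E \<equiv> KS_potential \<mu> \<epsilon> u \<phi>" and "C \<equiv> (3 - 4*\<mu> + \<mu>^2) / 2"
  assumes \<mu>: "\<mu> = m^3" "m \<le> 1/10" and \<epsilon>: "0 < \<epsilon>" "\<epsilon> < 1"
    and K0: "K_reg \<mu> \<epsilon> u \<phi> U \<Phi> = 0" and near: "r \<le> m"
    and band: "\<Gamma>0/2 \<le> Gamma_fn \<mu> \<epsilon> \<phi> \<Phi>" and small: "m^2 \<le> (1 - \<epsilon>)^4 * \<Gamma>0 / 10000"
    and dE: "\<bar>dE - 2 * E + 2 * \<mu>\<bar> \<le> 16 * r^3"
  shows "\<bar>- \<epsilon> * sin \<phi> / \<rho>^2 * (E - C * r) - r * (pi_KS u $ 3)^2 * \<epsilon> * sin \<phi> / (2 * \<rho>)\<bar>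
      \<le> 1 / (1 - \<epsilon>) * ((norm (U - b))^2 / 4 + inner (U - b) b + dE / \<rho> - 2 * \<Phi> * r)"
proof -
  define e where "e = 1 - \<epsilon>"
  define \<Gamma> where "\<Gamma> = Gamma_fn \<mu> \<epsilon> \<phi> \<Phi>"
  define VV where "VV = (norm (U - b))^2"
  note z = zero_level_near_P2[OF \<mu> \<epsilon> K0 near[unfolded r_def], folded \<rho>_def r_def E_def C_def]
  have VV: "VV = 8 * ((E - C * r) / \<rho> + \<Gamma> * r)" using z(7) unfolding VV_def b_def \<Gamma>_def .
  have \<Phi>r: "2 * \<Phi> * r = 2 * E / \<rho> - VV / 4" using z(8) unfolding VV_def b_def .
  have e: "0 < e" "e \<le> 1" "e \<le> \<rho>" and \<rho>: "0 < \<rho>" "\<rho> \<le> 2"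
    using \<epsilon> z(3,4) unfolding e_def by auto
  have \<Gamma>_big: "48 * r^2 \<le> e * \<Gamma>"
    using radius_small_in_band[OF e(1,2) z(1) near] small band unfolding e_def \<Gamma>_def by blast
  then have \<Gamma>: "0 \<le> \<Gamma>" using e(1) zero_le_power2[of r] by (smt (verit) zero_le_mult_iff)
  have rate: "\<bar>- (\<epsilon> * sin \<phi>) / \<rho>^2 * (E - C * r) - r * (pi_KS u $ 3)^2 * (\<epsilon> * sin \<phi>) / (2 * \<rho>)\<bar>
      \<le> (\<mu> / \<rho> + \<Gamma> * r) / e"
    by (rule Gamma_rate_bound[OF e(1,3) \<rho>(2) eps_cos_sin_bounds(2)[OF \<epsilon>] z(2,1,5,6)])
      (use \<Gamma>_big zero_le_power2[of r] in linarith)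
  have lower: "7/4 * (\<mu> / \<rho> + \<Gamma> * r) \<le> VV / 2 + inner (U - b) b + (dE - 2 * E) / \<rho>"
  proof (rule virial_rate_lower_bound[OF \<rho> z(1) _ VV _ z(6) _ _ _ dE])
    show "48 * r^2 \<le> \<rho> * \<Gamma>" using \<Gamma>_big e(3) \<Gamma> by (smt (verit) mult_right_mono)
    show "(inner (U - b) b)^2 \<le> VV * (norm b)^2"
      unfolding VV_def power2_norm_eq_inner by (rule Cauchy_Schwarz_ineq)
    show "(norm b)^2 \<le> 4 * r^3" unfolding b_def r_def by (rule norm_b_KS_sq_le)
  qed (auto simp: VV_def)
  have "0 \<le> \<mu> / \<rho> + \<Gamma> * r" using z(1,2) \<rho> \<Gamma> by simp
  moreover have "(dE - 2 * E) / \<rho> = dE / \<rho> - 2 * E / \<rho>" by (simp add: diff_divide_distrib)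
  ultimately have "\<mu> / \<rho> + \<Gamma> * r \<le> VV / 4 + inner (U - b) b + dE / \<rho> - 2 * \<Phi> * r"
    using lower \<Phi>r by argo
  then have "(\<mu> / \<rho> + \<Gamma> * r) / e \<le> (VV / 4 + inner (U - b) b + dE / \<rho> - 2 * \<Phi> * r) / e"
    using e by (simp add: divide_right_mono)
  with rate show ?thesis unfolding VV_def e_def[symmetric] by (simp add: mult.assoc)
qed

lemma virial_small_in_band:
  fixes u U :: "real^4" and \<mu> \<epsilon> \<phi> \<Phi> m \<Gamma>0 :: real
  assumes \<mu>: "\<mu> = m^3" "m \<le> 1/10" and \<epsilon>: "0 < \<epsilon>" "\<epsilon> < 1"
    and K0: "K_reg \<mu> \<epsilon> u \<phi> U \<Phi> = 0" and near: "(norm u)^2 \<le> m"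
    and band: "\<Gamma>0/2 \<le> Gamma_fn \<mu> \<epsilon> \<phi> \<Phi>" "Gamma_fn \<mu> \<epsilon> \<phi> \<Phi> \<le> 3*\<Gamma>0/2"
    and small: "m^2 \<le> (1 - \<epsilon>)^4 * \<Gamma>0 / 10000"
  shows "1 / (1 - \<epsilon>) * \<bar>inner u U\<bar> \<le> \<Gamma>0 / 8"
proof -
  define e where "e = 1 - \<epsilon>"
  note z = zero_level_near_P2[OF \<mu> \<epsilon> K0 near]
  have e: "0 < e" "e \<le> 1" "e \<le> 1 + \<epsilon> * cos \<phi>" using \<epsilon> z(3) unfolding e_def by auto
  have "0 \<le> e^4 * \<Gamma>0" using small zero_le_power2[of m] unfolding e_def by linarith
  then have "0 \<le> Gamma_fn \<mu> \<epsilon> \<phi> \<Phi>" using band(1) e by (simp add: zero_le_mult_iff)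
  moreover have "(inner u (U - b_KS u))^2 \<le> (norm u)^2 * (norm (U - b_KS u))^2"
    unfolding power2_norm_eq_inner by (rule Cauchy_Schwarz_ineq)
  ultimately have "\<bar>inner u (U - b_KS u)\<bar> \<le> e * \<Gamma>0 / 8"
    using virial_bound[OF e z(1) near \<mu>(1) _ band(2) small[folded e_def] z(7) z(6)] by blast
  moreover have "inner u (U - b_KS u) = inner u U" by (simp add: inner_diff_right inner_b_KS_self)
  ultimately show ?thesis using e unfolding e_def[symmetric] by (simp add: field_simps)
qed

lemma Gamma_and_virial_rates_in_band:
  fixes u U :: "real \<Rightarrow> real^4" and \<phi> \<Phi> :: "real \<Rightarrow> real" and \<mu> \<epsilon> m \<Gamma>0 s :: real
  assumes \<mu>: "\<mu> = m^3" "m \<le> 1/10" and \<epsilon>: "0 < \<epsilon>" "\<epsilon> < 1"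
    and ham: "hamiltonian_solution (K_ham \<mu> \<epsilon>) (\<lambda>s. (u s, \<phi> s)) (\<lambda>s. (U s, \<Phi> s)) S"
    and s: "s \<in> S" and \<phi>': "(\<phi> has_real_derivative (norm (u s))^2) (at s within S)"
    and K0: "K_reg \<mu> \<epsilon> (u s) (\<phi> s) (U s) (\<Phi> s) = 0" and near: "(norm (u s))^2 \<le> m"
    and band: "\<Gamma>0/2 \<le> Gamma_fn \<mu> \<epsilon> (\<phi> s) (\<Phi> s)" and small: "m^2 \<le> (1 - \<epsilon>)^4 * \<Gamma>0 / 10000"
  shows "\<exists>\<Gamma>' w'. ((\<lambda>s. Gamma_fn \<mu> \<epsilon> (\<phi> s) (\<Phi> s)) has_real_derivative \<Gamma>') (at s within S)
    \<and> ((\<lambda>s. inner (u s) (U s)) has_real_derivative w') (at s within S) \<and> \<bar>\<Gamma>'\<bar> \<le> 1 / (1 - \<epsilon>) * w'"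
proof -
  note bounds = eps_cos_sin_bounds[OF \<epsilon>, of "\<phi> s"]
  have \<rho>: "1 + \<epsilon> * cos (\<phi> s) \<noteq> 0" using bounds(3) \<epsilon> by linarith
  have "0 \<le> m" using near zero_le_power2[of "norm (u s)"] by linarith
  then have "(norm (u s))^2 \<le> 1/10" "0 \<le> \<mu>" "\<mu> \<le> 1" using near \<mu> by (auto simp: power_le_one)
  then obtain dE where dE: "((\<lambda>t. KS_potential \<mu> \<epsilon> (u s + t *\<^sub>R u s) (\<phi> s)) has_real_derivative dE) (at 0)"
    and dE_bound: "\<bar>dE - 2 * KS_potential \<mu> \<epsilon> (u s) (\<phi> s) + 2 * \<mu>\<bar> \<le> 16 * ((norm (u s))^2)^3"
    using KS_potential_radial_derivative[OF _ bounds(1)] by metis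
  show ?thesis
    using Gamma_has_derivative_along_solution[OF ham s \<phi>' \<rho>]
      virial_has_derivative_along_solution[OF ham s \<rho> dE]
      Gamma_rate_le_virial_rate[OF \<mu> \<epsilon> K0 near band small dE_bound]
    by blast
qed

section \<open>The bootstrap argument\<close>

lemma first_exit_time:
  fixes f :: "real \<Rightarrow> real"
  assumes cont: "continuous_on {a..b} f" and start: "f a \<in> {l<..<h}"
    and exit: "s0 \<in> {a..b}" "f s0 \<notin> {l<..<h}"
  obtains t where "a < t" "t \<le> b" "f t = l \<or> f t = h" "\<And>s. a \<le> s \<Longrightarrow> s < t \<Longrightarrow> f s \<in> {l<..<h}"
proof -
  define T where "T = {a..b} \<inter> f -` (- {l<..<h})"
  have "closed T" unfolding T_def by (rule continuous_closed_preimage[OF cont]) auto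
  moreover have "s0 \<in> T" using exit unfolding T_def by auto
  moreover have bdd: "bdd_below T" unfolding T_def by (rule bdd_belowI[of _ a]) auto
  ultimately have tT: "Inf T \<in> T" using closed_contains_Inf by blast
  define t where "t = Inf T"
  have t: "a \<le> t" "t \<le> b" "f t \<notin> {l<..<h}" using tT unfolding t_def T_def by auto
  have before: "f s \<in> {l<..<h}" if "a \<le> s" "s < t" for s
  proof -
    have "s \<notin> T" using that cInf_lower[OF _ bdd] unfolding t_def by force
    then show ?thesis using that t unfolding T_def by auto
  qed
  have "a \<noteq> t" using t(3) start by auto
  then have at: "a < t" using t by simp
  have cont_t: "continuous_on {a..t} f" using cont t by (auto elim: continuous_on_subset)
  have "f t = l \<or> f t = h"
  proof (cases "h \<le> f t")
    case True
    then obtain x where x: "a \<le> x" "x \<le> t" "f x = h"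
      using IVT'[of f a h t] start at cont_t by auto
    then show ?thesis using before[of x] by (cases "x = t") auto
  next
    case False
    then have "f t \<le> l" using t(3) by auto
    then obtain x where x: "a \<le> x" "x \<le> t" "f x = l"
      using IVT2'[of f t l a] start at cont_t by auto
    then show ?thesis using before[of x] by (cases "x = t") auto
  qed
  then show ?thesis using that at t before by blast
qed

lemma band_bootstrap:
  fixes \<Gamma> w :: "real \<Rightarrow> real" and a b \<Gamma>0 M :: real
  assumes \<Gamma>0: "0 < \<Gamma>0" "\<Gamma> a = \<Gamma>0" and M: "0 \<le> M"
    and cont: "continuous_on {a..b} \<Gamma>" "continuous_on {a..b} w"
    and deriv: "\<And>s. a < s \<Longrightarrow> s < b \<Longrightarrow> \<Gamma> s \<in> {\<Gamma>0/2..3*\<Gamma>0/2} \<Longrightarrow>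
      \<exists>\<Gamma>' w'. (\<Gamma> has_real_derivative \<Gamma>') (at s) \<and> (w has_real_derivative w') (at s) \<and> \<bar>\<Gamma>'\<bar> \<le> M * w'"
    and small: "\<And>s. a \<le> s \<Longrightarrow> s \<le> b \<Longrightarrow> \<Gamma> s \<in> {\<Gamma>0/2..3*\<Gamma>0/2} \<Longrightarrow> M * \<bar>w s\<bar> \<le> \<Gamma>0/8"
  shows "\<forall>s\<in>{a..b}. \<Gamma> s \<in> {\<Gamma>0/2..3*\<Gamma>0/2}"
proof (rule ccontr)
  assume "\<not> ?thesis"
  then obtain s0 where "s0 \<in> {a..b}" "\<Gamma> s0 \<notin> {\<Gamma>0/2<..<3*\<Gamma>0/2}" by auto
  moreover have "\<Gamma> a \<in> {\<Gamma>0/2<..<3*\<Gamma>0/2}" using \<Gamma>0 by simp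
  ultimately obtain t where t: "a < t" "t \<le> b" "\<Gamma> t = \<Gamma>0/2 \<or> \<Gamma> t = 3*\<Gamma>0/2"
    and inside: "\<And>s. a \<le> s \<Longrightarrow> s < t \<Longrightarrow> \<Gamma> s \<in> {\<Gamma>0/2<..<3*\<Gamma>0/2}"
    using first_exit_time[OF cont(1)] by blast
  have cont_t: "continuous_on {a..t} \<Gamma>" "continuous_on {a..t} w"
    using cont t by (auto elim: continuous_on_subset)
  have incr: "\<exists>D. ((\<lambda>s. \<Gamma> s + M * w s) has_real_derivative D) (at s) \<and> 0 \<le> D"
    "\<exists>D. ((\<lambda>s. M * w s - \<Gamma> s) has_real_derivative D) (at s) \<and> 0 \<le> D"
    if s: "a < s" "s < t" for s
  proof -
    obtain \<Gamma>' w' where d\<Gamma>: "(\<Gamma> has_real_derivative \<Gamma>') (at s)"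
      and dw: "(w has_real_derivative w') (at s)" and bound: "\<bar>\<Gamma>'\<bar> \<le> M * w'"
    proof -
      have "s < b" "\<Gamma> s \<in> {\<Gamma>0/2..3*\<Gamma>0/2}" using inside[of s] s t by auto
      then show ?thesis using deriv[of s] s that by blast
    qed
    have "0 \<le> \<Gamma>' + M * w'" "0 \<le> M * w' - \<Gamma>'" using bound by auto
    then show "\<exists>D. ((\<lambda>s. \<Gamma> s + M * w s) has_real_derivative D) (at s) \<and> 0 \<le> D"
      and "\<exists>D. ((\<lambda>s. M * w s - \<Gamma> s) has_real_derivative D) (at s) \<and> 0 \<le> D"
      using DERIV_add[OF d\<Gamma> DERIV_cmult[OF dw]] DERIV_diff[OF DERIV_cmult[OF dw] d\<Gamma>] by blast+
  qed
  have "(\<lambda>s. \<Gamma> s + M * w s) a \<le> (\<lambda>s. \<Gamma> s + M * w s) t"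
    by (rule DERIV_nonneg_imp_increasing_open)
      (use t(1) incr(1) cont_t in \<open>auto intro: continuous_on_add continuous_on_mult_left\<close>)
  moreover have "(\<lambda>s. M * w s - \<Gamma> s) a \<le> (\<lambda>s. M * w s - \<Gamma> s) t"
    by (rule DERIV_nonneg_imp_increasing_open)
      (use t(1) incr(2) cont_t in \<open>auto intro: continuous_on_diff continuous_on_mult_left\<close>)
  moreover have "\<bar>M * w a\<bar> \<le> \<Gamma>0/8" "\<bar>M * w t\<bar> \<le> \<Gamma>0/8"
    using small[of a] small[of t] t \<Gamma>0 M by (auto simp: abs_mult)
  ultimately have "\<Gamma> t \<in> {\<Gamma>0/2<..<3*\<Gamma>0/2}"
    using \<Gamma>0 unfolding abs_le_iff by auto
  then show False using t(3) by auto
qed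

lemma Gamma_stays_in_band:
  fixes u U :: "real \<Rightarrow> real^4" and \<phi> \<Phi> :: "real \<Rightarrow> real" and \<mu> \<epsilon> m s1 s2 \<Gamma>0 :: real
  defines "S \<equiv> {s1..s2}"
  assumes \<mu>: "\<mu> = m^3" "m \<le> 1/10" and \<epsilon>: "0 < \<epsilon>" "\<epsilon> < 1"
    and ham: "hamiltonian_solution (K_ham \<mu> \<epsilon>) (\<lambda>s. (u s, \<phi> s)) (\<lambda>s. (U s, \<Phi> s)) S"
    and K0: "\<And>s. s \<in> S \<Longrightarrow> K_reg \<mu> \<epsilon> (u s) (\<phi> s) (U s) (\<Phi> s) = 0"
    and \<phi>': "\<And>s. s \<in> S \<Longrightarrow> (\<phi> has_real_derivative (norm (u s))^2) (at s within S)"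
    and near: "\<And>s. s \<in> S \<Longrightarrow> (norm (u s))^2 \<le> m"
    and \<Gamma>0: "\<Gamma>0 = Gamma_fn \<mu> \<epsilon> (\<phi> s1) (\<Phi> s1)" "0 < \<Gamma>0"
    and small: "m^2 \<le> (1 - \<epsilon>)^4 * \<Gamma>0 / 10000"
  shows "\<forall>s\<in>S. Gamma_fn \<mu> \<epsilon> (\<phi> s) (\<Phi> s) \<in> {\<Gamma>0/2..3*\<Gamma>0/2}"
  unfolding S_def
proof (rule band_bootstrap)
  have "continuous_on S (\<lambda>s. (u s, \<phi> s))" "continuous_on S (\<lambda>s. (U s, \<Phi> s))"
    using hamiltonian_solution_continuous[OF ham] by auto
  then have cont: "continuous_on S u" "continuous_on S \<phi>" "continuous_on S U" "continuous_on S \<Phi>"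
    using continuous_on_fst continuous_on_snd by fastforce+
  have "1 + \<epsilon> * cos x \<noteq> 0" for x using eps_cos_sin_bounds(3)[OF \<epsilon>, of x] \<epsilon> by linarith
  with cont show "continuous_on {s1..s2} (\<lambda>s. Gamma_fn \<mu> \<epsilon> (\<phi> s) (\<Phi> s))"
    unfolding Gamma_fn_eq S_def by (intro continuous_intros) auto
  from cont show "continuous_on {s1..s2} (\<lambda>s. inner (u s) (U s))"
    unfolding S_def by (intro continuous_intros)
  show "0 < \<Gamma>0" "Gamma_fn \<mu> \<epsilon> (\<phi> s1) (\<Phi> s1) = \<Gamma>0" "0 \<le> 1 / (1 - \<epsilon>)" using \<Gamma>0 \<epsilon> by auto
next
  fix s assume "s1 < s" "s < s2" and band: "Gamma_fn \<mu> \<epsilon> (\<phi> s) (\<Phi> s) \<in> {\<Gamma>0/2..3*\<Gamma>0/2}"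
  then have s: "s \<in> S" and "at s within S = at s" by (simp_all add: S_def at_within_Icc_at)
  then show "\<exists>\<Gamma>' w'. ((\<lambda>s. Gamma_fn \<mu> \<epsilon> (\<phi> s) (\<Phi> s)) has_real_derivative \<Gamma>') (at s)
      \<and> ((\<lambda>s. inner (u s) (U s)) has_real_derivative w') (at s) \<and> \<bar>\<Gamma>'\<bar> \<le> 1 / (1 - \<epsilon>) * w'"
    using Gamma_and_virial_rates_in_band[OF \<mu> \<epsilon> ham s \<phi>'[OF s] K0[OF s] near[OF s] _ small] band
    by simp
next
  fix s assume "s1 \<le> s" "s \<le> s2" and band: "Gamma_fn \<mu> \<epsilon> (\<phi> s) (\<Phi> s) \<in> {\<Gamma>0/2..3*\<Gamma>0/2}"
  then show "1 / (1 - \<epsilon>) * \<bar>inner (u s) (U s)\<bar> \<le> \<Gamma>0 / 8"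
    using virial_small_in_band[OF \<mu> \<epsilon> K0 near _ _ small] by (simp add: S_def)
qed

lemma nondecreasing_if_nonneg_derivative_within:
  fixes f g :: "real \<Rightarrow> real"
  assumes deriv: "\<And>s. s \<in> {a..b} \<Longrightarrow> (f has_real_derivative g s) (at s within {a..b})"
    and nonneg: "\<And>s. s \<in> {a..b} \<Longrightarrow> 0 \<le> g s"
    and xy: "a \<le> x" "x \<le> y" "y \<le> b"
  shows "f x \<le> f y"
proof (rule DERIV_nonneg_imp_increasing_open[OF xy(2)])
  have "continuous_on {a..b} f" using deriv by (rule DERIV_continuous_on)
  then show "continuous_on {x..y} f" by (rule continuous_on_subset) (use xy in auto)
  show "\<exists>D. (f has_real_derivative D) (at z) \<and> 0 \<le> D" if "x < z" "z < y" for z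
  proof -
    have "z \<in> {a..b}" "at z within {a..b} = at z" using that xy by (simp_all add: at_within_Icc_at)
    then show ?thesis using deriv[of z] nonneg[of z] by auto
  qed
qed

lemma cube_root_square_small:
  fixes \<mu> e \<Gamma>0 :: real
  assumes \<mu>: "0 < \<mu>" and \<Gamma>0: "0 < \<Gamma>0" and small: "\<mu> < 1/1000000 * e^6 * \<Gamma>0 powr (3/2)"
  shows "(\<mu> powr (1/3))^2 \<le> e^4 * \<Gamma>0 / 10000"
proof -
  define m where "m = \<mu> powr (1/3)"
  define g where "g = sqrt \<Gamma>0"
  have m: "0 < m" "m^3 = \<mu>" unfolding m_def using \<mu> by (simp_all add: powr_powr flip: powr_realpow)
  have g: "0 < g" "g^2 = \<Gamma>0" unfolding g_def using \<Gamma>0 by simp_all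
  have "g^3 = g powr 3" using g by simp
  also have "\<dots> = (\<Gamma>0 powr (1/2)) powr 3" unfolding g_def using \<Gamma>0 by (simp add: powr_half_sqrt)
  also have "\<dots> = \<Gamma>0 powr (3/2)" by (simp add: powr_powr)
  finally have "m^Suc 2 < (e^2 * g / 100)^Suc 2"
    using small m by (simp add: power_mult_distrib power_divide flip: power_mult)
  then have "m < e^2 * g / 100" by (rule power_less_imp_less_base) (use g in simp)
  then have "m^2 < (e^2 * g / 100)^2" using m by (intro power_strict_mono) auto
  also have "\<dots> = e^4 * \<Gamma>0 / 10000" using g by (simp add: power_mult_distrib power_divide flip: power_mult)
  finally show ?thesis unfolding m_def by simp
qed

(* The hypotheses fixing f1, f2 and q come first, so that resolving with this lemma in
   mainTheorem4 instantiates them by assumption. *)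
lemma Gamma_band_during_transit:
  fixes q :: "real \<Rightarrow> real^3" and u U :: "real \<Rightarrow> real^4" and \<phi> \<Phi> :: "real \<Rightarrow> real"
    and \<mu> \<epsilon> f1 f2 s1 s2 :: real
  defines "\<Gamma>0 \<equiv> Gamma_fn \<mu> \<epsilon> (\<phi> s1) (\<Phi> s1)"
  assumes ends: "\<phi> s1 = f1" "\<phi> s2 = f2" and KS: "\<forall>s\<in>{s1..s2}. pi_KS (u s) = q (\<phi> s)"
    and hill: "norm (q f1) = \<mu> powr (1/3)" "norm (q f2) = \<mu> powr (1/3)"
      "\<forall>f\<in>{f1<..<f2}. norm (q f) < \<mu> powr (1/3)"
    and \<mu>: "0 < \<mu>" "\<mu> \<le> 1/1000" and \<epsilon>: "0 < \<epsilon>" "\<epsilon> < 1"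
    and ham: "hamiltonian_solution (K_ham \<mu> \<epsilon>) (\<lambda>s. (u s, \<phi> s)) (\<lambda>s. (U s, \<Phi> s)) {s1..s2}"
    and K0: "\<forall>s\<in>{s1..s2}. K_reg \<mu> \<epsilon> (u s) (\<phi> s) (U s) (\<Phi> s) = 0"
    and \<phi>': "\<forall>s\<in>{s1..s2}. (\<phi> has_real_derivative (norm (u s))^2) (at s within {s1..s2})"
    and \<Gamma>0: "0 < \<Gamma>0" and small: "\<mu> < 1/1000000 * (1 - \<epsilon>)^6 * \<Gamma>0 powr (3/2)"
  shows "\<forall>s\<in>{s1..s2}. Gamma_fn \<mu> \<epsilon> (\<phi> s) (\<Phi> s) \<in> {\<Gamma>0/2 .. 3 * \<Gamma>0/2}"
proof -
  define m where "m = \<mu> powr (1/3)"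
  have m3: "m^3 = \<mu>" unfolding m_def using \<mu> by (simp add: powr_powr flip: powr_realpow)
  have m1: "m \<le> 1/10"
  proof (rule power_le_imp_le_base)
    show "m^Suc 2 \<le> (1/10)^Suc 2" using m3 \<mu> by (simp add: power_divide)
  qed simp
  have mono: "\<phi> x \<le> \<phi> y" if "s1 \<le> x" "x \<le> y" "y \<le> s2" for x y
    by (rule nondecreasing_if_nonneg_derivative_within[where g = "\<lambda>s. (norm (u s))^2"])
      (use \<phi>' that in auto)
  have near: "(norm (u s))^2 \<le> m" if s: "s \<in> {s1..s2}" for s
  proof -
    have "f1 \<le> \<phi> s" "\<phi> s \<le> f2" using mono[of s1 s] mono[of s s2] s ends by auto
    then have "norm (q (\<phi> s)) \<le> m"
      using hill unfolding m_def by (cases "\<phi> s = f1 \<or> \<phi> s = f2") (auto intro: less_imp_le)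
    then show ?thesis using KS s norm_pi_KS by metis
  qed
  show ?thesis
    using Gamma_stays_in_band[OF m3[symmetric] m1 \<epsilon> ham K0[rule_format] \<phi>'[rule_format] near
        \<Gamma>0_def[THEN meta_eq_to_obj_eq] \<Gamma>0 cube_root_square_small[OF \<mu>(1) \<Gamma>0 small, folded m_def]]
    by blast
qed

theorem mainTheorem4:
  shows "\<exists>\<mu>0 c::real. 0 < \<mu>0 \<and> \<mu>0 < 1/10 \<and> 0 < c \<and>
    (\<forall>\<mu> \<epsilon> f1 f2 (q :: real \<Rightarrow> real^3) (p :: real \<Rightarrow> real^3) s1 s2
        (u :: real \<Rightarrow> real^4) (\<phi> :: real \<Rightarrow> real) (U :: real \<Rightarrow> real^4) (\<Phi> :: real \<Rightarrow> real).
      0 < \<mu> \<and> \<mu> \<le> \<mu>0 \<and> 0 < \<epsilon> \<and> \<epsilon> < 1 \<and>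
      f1 < f2 \<and> s1 < s2 \<and>
      hamiltonian_solution (H_ER3BP \<mu> \<epsilon>) (\<lambda>f. q f + vector [1 - \<mu>, 0, 0]) p {f1..f2} \<and>
      norm (q f1) = \<mu> powr (1/3) \<and> norm (q f2) = \<mu> powr (1/3) \<and>
      (\<forall>f\<in>{f1<..<f2}. 0 < norm (q f) \<and> norm (q f) < \<mu> powr (1/3)) \<and>
      hamiltonian_solution (K_ham \<mu> \<epsilon>) (\<lambda>s. (u s, \<phi> s)) (\<lambda>s. (U s, \<Phi> s)) {s1..s2} \<and>
      (\<forall>s\<in>{s1..s2}. l_KS (u s) (U s) = 0 \<and> K_reg \<mu> \<epsilon> (u s) (\<phi> s) (U s) (\<Phi> s) = 0) \<and>
      (\<forall>s\<in>{s1..s2}. (\<phi> has_real_derivative (norm (u s))^2) (at s within {s1..s2})) \<and>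
      (\<forall>s\<in>{s1..s2}. pi_KS (u s) = q (\<phi> s)) \<and>
      \<phi> s1 = f1 \<and> \<phi> s2 = f2 \<and>
      0 < Gamma_fn \<mu> \<epsilon> (\<phi> s1) (\<Phi> s1) \<and>
      \<mu> < c * (1 - \<epsilon>)^6 * (Gamma_fn \<mu> \<epsilon> (\<phi> s1) (\<Phi> s1)) powr (3/2)
      \<longrightarrow> (\<forall>s\<in>{s1..s2}.
             Gamma_fn \<mu> \<epsilon> (\<phi> s) (\<Phi> s) \<in>
               {Gamma_fn \<mu> \<epsilon> (\<phi> s1) (\<Phi> s1) / 2 .. 3 * Gamma_fn \<mu> \<epsilon> (\<phi> s1) (\<Phi> s1) / 2}))"
proof (rule exI[of _ "1/1000"], rule exI[of _ "1/1000000"], intro conjI allI impI)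
  show "0 < (1/1000::real)" "(1/1000::real) < 1/10" "0 < (1/1000000::real)" by simp_all
qed (elim conjE, rule Gamma_band_during_transit, (assumption | fast)+)

end
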